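(* Let $\lambda>0$, $f:\mathbb{R}^n\to\mathbb{R}$ twice continuously differentiable, $\varphi=f+\lambda\|\cdot\|_1$, and $x^0$ with $\mathcal{L}_\varphi(x^0)$ bounded and $f$ twice uniformly Lipschitz continuously differentiable on an open neighborhood of it. Suppose that at iteration $k$ of PGN2CM (described in the context) a Newton-CG step is invoked and the Capped CG method returns $d_{\rm type}=\mathrm{SOL}$. Define $g^{k+1}_{\neq0\varepsilon}:=(g(x^{k+1}))_{I^{k\varepsilon}_{\neq0}}$, where $I^{k\varepsilon}_{\neq0}=\{i:|x^k_i|>\varepsilon_g^{1/2}\}$. Then $j_k<+\infty$ and $$\varphi(x^k)-\varphi(x^{k+1})\ge c_{sol}\min\{\|g^{k+1}_{\neq0\varepsilon}\|^2\varepsilon_h^{-1},\varepsilon_h^3,\varepsilon_g\varepsilon_h\},$$ where $c_{sol}=\eta\min\Big\{\big(\frac{4}{\sqrt{(\zeta+4\hat\tau)^2+8L_H}+(\zeta+4\hat\tau)}\big)^2,\frac{9(1-\zeta-2\eta)^2\theta^2}{L_H^2},\theta^2,\frac{(1-\zeta)^2\theta^2}{4\max\{L_H/3,2\eta\}^2}\Big\}$.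
   Context: Constants $L_g,L_H,U_g>0$ with, for $x,y\in\mathcal{L}_\varphi(x^0)=\{x:\varphi(x)\le\varphi(x^0)\}$: $\|\nabla^2f(x)(y-x)-(\nabla f(y)-\nabla f(x))\|\le\frac{L_H}2\|y-x\|^2$, $f(y)\le f(x)+\nabla f(x)^\top(y-x)+\frac12(y-x)^\top\nabla^2f(x)(y-x)+\frac{L_H}6\|y-x\|^3$, $\|\nabla f(x)\|\le U_g$, $\|\nabla^2f(x)\|\le L_g$. $\mathrm{sgn}(0)=1$. $g(x)_i=(\nabla f(x))_i+\lambda$ if $x_i>0$, $(\nabla f(x))_i-\lambda$ if $x_i<0$, $(\nabla f(x))_i-\min\{\max\{-\lambda,(\nabla f(x))_i\},\lambda\}$ if $x_i=0$. For $x$: $I^\varepsilon_0=\{i:|x_i|\le\varepsilon_g^{1/2}\}$, $I^\varepsilon_{\neq0}=\{i:|x_i|>\varepsilon_g^{1/2}\}$; $g^\varepsilon(x)_i=(\nabla f(x))_i+\lambda$ if $x_i>\varepsilon_g^{1/2}$, $(\nabla f(x))_i-\lambda$ if $x_i<-\varepsilon_g^{1/2}$, $(\nabla f(x))_i-\min\{\max\{-\lambda-\varepsilon_g^{3/4},(\nabla f(x))_i\},\lambda+\varepsilon_g^{3/4}\}$ otherwise. Capped CG (inputs symmetric $H$, $g$, $\epsilon$, $\zeta\in(0,1)$, $\delta$, $\bar\tau$, $M\ge0$): $\bar H=H+\bar\tau\|g\|^\delta I$, $\kappa=\frac{M+\bar\tau\|g\|^\delta}\epsilon$, $\hat\zeta=\frac\zeta{3\kappa}$,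 $\tau=\frac{\sqrt\kappa}{\sqrt\kappa+1}$, $T=\frac{4\kappa^4}{(1-\sqrt\tau)^2}$, $y_0=0,r_0=g,p_0=-g$; if $p_0^\top\bar Hp_0<\epsilon\|p_0\|^2$ return $(p_0,\mathrm{NC})$; if $\|Hp_0\|>M\|p_0\|$ update $M=\|Hp_0\|/\|p_0\|$ and $\kappa,\hat\zeta,\tau,T$. Loop: $\alpha_j=\|r_j\|^2/p_j^\top\bar Hp_j$, $y_{j+1}=y_j+\alpha_jp_j$, $r_{j+1}=r_j+\alpha_j\bar Hp_j$, $\beta_{j+1}=\|r_{j+1}\|^2/\|r_j\|^2$, $p_{j+1}=-r_{j+1}+\beta_{j+1}p_j$, $j\leftarrow j+1$; update $M$ whenever $\|Hv\|>M\|v\|$ for $v\in\{p_j,y_j,r_j\}$; then if $y_j^\top\bar Hy_j<\epsilon\|y_j\|^2$ return $(y_j,\mathrm{NC})$; elif $\|r_j\|\le\hat\zeta\|r_0\|$ return $(y_j,\mathrm{SOL})$; elif $p_j^\top\bar Hp_j<\epsilon\|p_j\|^2$ return $(p_j,\mathrm{NC})$; elif $\|r_j\|>\sqrt T\tau^{j/2}\|r_0\|$, compute $y_{j+1}$, find $i<j$ with $(y_{j+1}-y_i)^\top\bar H(y_{j+1}-y_i)<\epsilon\|y_{j+1}-y_i\|^2$ and return $(y_{j+1}-y_i,\mathrm{NC})$. Newton-CG step of PGN2CM (parameters $0<\varepsilon_g,\varepsilon_h<1$, $\delta\in[0,1]$, $\hat\tau\ge1$, $\zeta\in(0,1)$,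 $\eta\in(0,\frac{1-\zeta}2)$, $\theta\in(0,1)$), invoked at $x^k$ when [$I^\varepsilon_0(x^k)=\emptyset$ or $g^\varepsilon(x^k)$ vanishes on it], $I^{k\varepsilon}_{\neq0}\neq\emptyset$ and $\|g^\varepsilon(x^k)_{I^{k\varepsilon}_{\neq0}}\|>\varepsilon_g$: with $H^k_{\neq0\varepsilon}=(\nabla^2f(x^k))_{I^{k\varepsilon}_{\neq0}}$, $g^k_{\neq0\varepsilon}=g^\varepsilon(x^k)_{I^{k\varepsilon}_{\neq0}}$, $\tau_k\in[\frac{2\varepsilon_h}{\|g^k_{\neq0\varepsilon}\|^\delta},\frac{2\hat\tau\varepsilon_h}{\|g^k_{\neq0\varepsilon}\|^\delta}]$, call Capped CG$(H^k_{\neq0\varepsilon},g^k_{\neq0\varepsilon},\varepsilon_h,\zeta,\delta,\tau_k,M)$ to get $(d,d_{\rm type})$; $d^k=0$ on $I^\varepsilon_0(x^k)$, $d^k_{I^{k\varepsilon}_{\neq0}}=d$ if SOL (and $-\mathrm{sgn}(d^\top g^k_{\neq0\varepsilon})\frac{|d^\top H^k_{\neq0\varepsilon}d|}{\|d\|^2}\frac d{\|d\|}$ if NC); $x^{k+1}=x^k+\theta^{j_k}d^k$, $j_k$ the smallest nonnegative integer $j$ with $\varphi(x^k+\theta^jd^k)<\varphi(x^k)-\eta\theta^{2j}\varepsilon_h\|d^k\|^2$. The iterates lie in $\mathcal{L}_\varphi(x^0)$. *)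

theory Defs
  imports "HOL-Analysis.Analysis"
begin

text \<open>A subvector indexed by a set I of
coordinates is modelled by the vector that agrees on I and is zero outside I
(an isometric embedding of R^|I|, preserving norms and inner products).\<close>

definition restr :: "'n set \<Rightarrow> real^'n \<Rightarrow> real^'n" where
  "restr I v = (\<chi> i. if i \<in> I then v$i else 0)"

definition l1norm :: "real^'n \<Rightarrow> real" where
  "l1norm v = (\<Sum>i\<in>UNIV. \<bar>v$i\<bar>)"

definition phi :: "(real^'n \<Rightarrow> real) \<Rightarrow> real \<Rightarrow> real^'n \<Rightarrow> real" where
  "phi f lam x = f x + lam * l1norm x"

definition levelset :: "(real^'n \<Rightarrow> real) \<Rightarrow> real \<Rightarrow> real^'n \<Rightarrow> (real^'n) set" where
  "levelset f lam x0 = {x. phi f lam x \<le> phi f lam x0}"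

definition gmap :: "(real^'n \<Rightarrow> real^'n) \<Rightarrow> real \<Rightarrow> real^'n \<Rightarrow> real^'n" where
  "gmap Df lam x = (\<chi> i. if x$i > 0 then Df x $ i + lam
                        else if x$i < 0 then Df x $ i - lam
                        else Df x $ i - min (max (- lam) (Df x $ i)) lam)"

definition I0eps :: "real \<Rightarrow> real^'n \<Rightarrow> 'n set" where
  "I0eps epsg x = {i. \<bar>x$i\<bar> \<le> sqrt epsg}"

definition Inzeps :: "real \<Rightarrow> real^'n \<Rightarrow> 'n set" where
  "Inzeps epsg x = {i. \<bar>x$i\<bar> > sqrt epsg}"

definition geps :: "(real^'n \<Rightarrow> real^'n) \<Rightarrow> real \<Rightarrow> real \<Rightarrow> real^'n \<Rightarrow> real^'n" where
  "geps Df lam epsg x = (\<chi> i. if x$i > sqrt epsg then Df x $ i + lam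
                        else if x$i < - sqrt epsg then Df x $ i - lam
                        else Df x $ i - min (max (- lam - epsg powr (3/4)) (Df x $ i)) (lam + epsg powr (3/4)))"

fun cg_iter :: "(real^'n \<Rightarrow> real^'n) \<Rightarrow> real^'n \<Rightarrow> nat \<Rightarrow> ((real^'n) \<times> (real^'n) \<times> (real^'n))" where
  "cg_iter Hb g 0 = (0, g, - g)"
| "cg_iter Hb g (Suc j) = (case cg_iter Hb g j of (y, r, p) \<Rightarrow>
      let a = (r \<bullet> r) / (p \<bullet> Hb p);
          y' = y + a *\<^sub>R p;
          r' = r + a *\<^sub>R Hb p;
          b = (r' \<bullet> r') / (r \<bullet> r)
      in (y', r', - r' + b *\<^sub>R p))"

definition cg_y :: "(real^'n \<Rightarrow> real^'n) \<Rightarrow> real^'n \<Rightarrow> nat \<Rightarrow> real^'n" where "cg_y Hb g j = fst (cg_iter Hb g j)"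
definition cg_r :: "(real^'n \<Rightarrow> real^'n) \<Rightarrow> real^'n \<Rightarrow> nat \<Rightarrow> real^'n" where "cg_r Hb g j = fst (snd (cg_iter Hb g j))"
definition cg_p :: "(real^'n \<Rightarrow> real^'n) \<Rightarrow> real^'n \<Rightarrow> nat \<Rightarrow> real^'n" where "cg_p Hb g j = snd (snd (cg_iter Hb g j))"

definition Mupd :: "(real^'n \<Rightarrow> real^'n) \<Rightarrow> real \<Rightarrow> real^'n \<Rightarrow> real" where
  "Mupd H M v = (if norm (H v) > M * norm v then norm (H v) / norm v else M)"

text \<open>Value of M in force when the termination tests of iteration j are performed.\<close>
fun cg_M :: "(real^'n \<Rightarrow> real^'n) \<Rightarrow> (real^'n \<Rightarrow> real^'n) \<Rightarrow> real^'n \<Rightarrow> real \<Rightarrow> nat \<Rightarrow> real" where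
  "cg_M H Hb g M0 0 = Mupd H M0 (cg_p Hb g 0)"
| "cg_M H Hb g M0 (Suc j) =
     Mupd H (Mupd H (Mupd H (cg_M H Hb g M0 j) (cg_p Hb g (Suc j))) (cg_y Hb g (Suc j))) (cg_r Hb g (Suc j))"

definition capped_cg_sol ::
  "(real^'n \<Rightarrow> real^'n) \<Rightarrow> real^'n \<Rightarrow> real \<Rightarrow> real \<Rightarrow> real \<Rightarrow> real \<Rightarrow> real \<Rightarrow> real^'n \<Rightarrow> bool" where
  "capped_cg_sol H g eps zeta delta taubar M0 d \<longleftrightarrow>
    (let s = taubar * norm g powr delta;
         Hb = (\<lambda>v. H v + s *\<^sub>R v);
         y = cg_y Hb g; r = cg_r Hb g; p = cg_p Hb g;
         Ms = cg_M H Hb g M0;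
         kappa = (\<lambda>j. (Ms j + s) / eps);
         zhat = (\<lambda>j. zeta / (3 * kappa j));
         tau = (\<lambda>j. sqrt (kappa j) / (sqrt (kappa j) + 1));
         T = (\<lambda>j. 4 * kappa j ^ 4 / (1 - sqrt (tau j))\<^sup>2);
         ncy = (\<lambda>j. y j \<bullet> Hb (y j) < eps * (norm (y j))\<^sup>2);
         sol = (\<lambda>j. norm (r j) \<le> zhat j * norm (r 0));
         ncp = (\<lambda>j. p j \<bullet> Hb (p j) < eps * (norm (p j))\<^sup>2);
         capped = (\<lambda>j. norm (r j) > sqrt (T j) * tau j powr (real j / 2) * norm (r 0))
     in \<not> ncp 0 \<and>
        (\<exists>j\<ge>1. (\<forall>i. 1 \<le> i \<and> i < j \<longrightarrow> \<not> ncy i \<and> \<not> sol i \<and> \<not> ncp i \<and> \<not> capped i)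
               \<and> \<not> ncy j \<and> sol j \<and> d = y j))"

end

theory Submission
  imports Defs
begin

(* A SOL output d of capped CG lives on the coordinates where |x^k_i| > sqrt eps_g, has residual at most
   zeta/2 eps_h ||d|| and curvature at least eps_h along d.  Steps of length at most sqrt eps_g keep the
   signs of these coordinates, so phi is smooth along the ray, and the cubic Taylor bound gives the Armijo
   decrease for every step t with t ||d|| <= min (3 (1 - zeta - 2 eta) eps_h / L_H) (sqrt eps_g).  Hence
   backtracking stops; either the unit step is accepted, and then the new gradient is controlled by the
   residual and the Hessian Lipschitz bound, or the accepted step is at least theta times that threshold. *)

definition supported_on :: "'n set \<Rightarrow> real^'n \<Rightarrow> bool" where
  "supported_on I v \<longleftrightarrow> (\<forall>i. i \<notin> I \<longrightarrow> v $ i = 0)"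

lemma supported_on_restr: "supported_on I (restr I v)"
  by (simp add: supported_on_def restr_def)

lemma linear_restr: "linear (restr I)"
  by (rule linearI) (simp_all add: restr_def vec_eq_iff)

lemma inner_restr_supported: "supported_on I u \<Longrightarrow> u \<bullet> restr I w = u \<bullet> w"
  unfolding inner_vec_def supported_on_def restr_def by (intro sum.cong) auto

lemma norm_restr_le: "norm (restr I v) \<le> norm v"
  unfolding norm_le inner_vec_def restr_def by (intro sum_mono) auto

lemma cg_iter_0 [simp]: "cg_y Hb g 0 = 0" "cg_r Hb g 0 = g" "cg_p Hb g 0 = - g"
  by (simp_all add: cg_y_def cg_r_def cg_p_def)

lemma cg_iter_Suc:
  "cg_y Hb g (Suc j) = cg_y Hb g j
     + ((cg_r Hb g j \<bullet> cg_r Hb g j) / (cg_p Hb g j \<bullet> Hb (cg_p Hb g j))) *\<^sub>R cg_p Hb g j"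
  "cg_r Hb g (Suc j) = cg_r Hb g j
     + ((cg_r Hb g j \<bullet> cg_r Hb g j) / (cg_p Hb g j \<bullet> Hb (cg_p Hb g j))) *\<^sub>R Hb (cg_p Hb g j)"
  "cg_p Hb g (Suc j) = - cg_r Hb g (Suc j)
     + ((cg_r Hb g (Suc j) \<bullet> cg_r Hb g (Suc j)) / (cg_r Hb g j \<bullet> cg_r Hb g j)) *\<^sub>R cg_p Hb g j"
  by (simp_all add: cg_y_def cg_r_def cg_p_def Let_def split: prod.split)

lemma cg_supported:
  assumes "supported_on I g" and "\<And>v. supported_on I v \<Longrightarrow> supported_on I (Hb v)"
  shows "supported_on I (cg_y Hb g j) \<and> supported_on I (cg_r Hb g j) \<and> supported_on I (cg_p Hb g j)"
proof (induction j)
  case 0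
  with assms(1) show ?case by (simp add: supported_on_def)
next
  case (Suc j)
  then have "supported_on I (Hb (cg_p Hb g j))" using assms(2) by blast
  with Suc show ?case by (simp add: cg_iter_Suc supported_on_def)
qed

lemma cg_residual:
  assumes "linear Hb"
  shows "cg_r Hb g j = Hb (cg_y Hb g j) + g"
  by (induction j) (simp_all add: cg_iter_Suc linear_0 linear_add linear_scale assms)

lemma Mupd_ge: "H 0 = 0 \<Longrightarrow> M \<le> Mupd H M v"
  by (cases "v = 0") (auto simp: Mupd_def pos_le_divide_eq)

lemma norm_le_Mupd: "H 0 = 0 \<Longrightarrow> norm (H v) \<le> Mupd H M v * norm v"
  by (cases "v = 0") (auto simp: Mupd_def)

lemma cg_M_ge: "H 0 = 0 \<Longrightarrow> M \<le> cg_M H Hb g M j"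
  by (induction j) (simp_all add: Mupd_ge, meson Mupd_ge order_trans)

lemma norm_cg_y_le:
  assumes "H 0 = 0"
  shows "norm (H (cg_y Hb g (Suc j))) \<le> cg_M H Hb g M (Suc j) * norm (cg_y Hb g (Suc j))"
proof -
  let ?y = "cg_y Hb g (Suc j)"
  let ?M = "Mupd H (Mupd H (cg_M H Hb g M j) (cg_p Hb g (Suc j))) ?y"
  have "norm (H ?y) \<le> ?M * norm ?y"
    using norm_le_Mupd[of H, OF assms] by blast
  also have "\<dots> \<le> Mupd H ?M (cg_r Hb g (Suc j)) * norm ?y"
    by (intro mult_right_mono Mupd_ge assms) simp
  finally show ?thesis by simp
qed

lemma relative_residual_bound:
  fixes w d g :: "'a::real_normed_vector"
  assumes w: "norm w \<le> K * norm d" and eps: "0 < eps" "eps \<le> K"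
    and zeta: "0 \<le> zeta" "zeta \<le> 1" and g: "g \<noteq> 0"
    and res: "norm (w + g) \<le> zeta / (3 * (K / eps)) * norm g"
  shows "d \<noteq> 0" and "norm (w + g) \<le> zeta / 2 * eps * norm d"
proof -
  define z where "z = zeta * eps / (3 * K)"
  have res': "norm (w + g) \<le> z * norm g"
    using res eps by (simp add: z_def field_simps)
  have "zeta * eps \<le> K"
    using eps zeta mult_right_mono[of zeta 1 eps] by linarith
  then have "z \<le> 1 / 3"
    using eps by (simp add: z_def divide_le_eq)
  then have "z * norm g \<le> 1 / 3 * norm g"
    by (rule mult_right_mono) simp
  moreover have "norm g \<le> norm (w + g) + norm w"
    by (metis add_diff_cancel_left' norm_triangle_ineq4)
  ultimately have g_le: "2 / 3 * norm g \<le> K * norm d"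
    using res' w by linarith
  then show "d \<noteq> 0"
    using g eps by auto
  have "norm (w + g) \<le> z * (3 / 2 * (K * norm d))"
    using res' g_le mult_left_mono[of "norm g" "3 / 2 * (K * norm d)" z] eps zeta
    by (simp add: z_def)
  also have "\<dots> = zeta / 2 * eps * norm d"
    using eps by (simp add: z_def field_simps)
  finally show "norm (w + g) \<le> zeta / 2 * eps * norm d" .
qed

lemma capped_cg_sol_bounds:
  fixes H :: "real^'n \<Rightarrow> real^'n"
  assumes sol: "capped_cg_sol H g eps zeta delta taubar M d"
    and H: "linear H" "\<And>v. supported_on I v \<Longrightarrow> supported_on I (H v)"
    and g: "supported_on I g"
    and s: "s = taubar * norm g powr delta" "eps \<le> s"
    and eps: "0 < eps" and zeta: "0 \<le> zeta" "zeta \<le> 1" and M: "0 \<le> M"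
  shows "supported_on I d" and "d \<noteq> 0"
    and "norm (H d + s *\<^sub>R d + g) \<le> zeta / 2 * eps * norm d"
    and "eps * (norm d)\<^sup>2 \<le> d \<bullet> (H d + s *\<^sub>R d)"
proof -
  define Hb where "Hb = (\<lambda>v. H v + s *\<^sub>R v)"
  obtain j where "1 \<le> j" and curv: "\<not> cg_y Hb g j \<bullet> Hb (cg_y Hb g j) < eps * (norm (cg_y Hb g j))\<^sup>2"
    and res: "norm (cg_r Hb g j) \<le> zeta / (3 * ((cg_M H Hb g M j + s) / eps)) * norm g"
    and d: "d = cg_y Hb g j"
    using sol unfolding capped_cg_sol_def Let_def Hb_def s(1) by auto
  then obtain j' where j': "j = Suc j'"
    by (cases j) auto
  have "linear Hb"
    unfolding Hb_def by (intro linear_compose_add H linear_scaleR)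
  then have r: "cg_r Hb g j = Hb d + g"
    unfolding d by (rule cg_residual)
  show "supported_on I d"
    using cg_supported[of I g Hb] g H(2) unfolding d Hb_def by (simp add: supported_on_def)
  have H0: "H 0 = 0"
    using H(1) by (rule linear_0)
  define K where "K = cg_M H Hb g M j + s"
  have "M \<le> cg_M H Hb g M j"
    using H0 by (rule cg_M_ge)
  then have "eps \<le> K"
    using M s(2) by (simp add: K_def)
  have "norm (Hb d) \<le> norm (H d) + s * norm d"
    using s eps by (simp add: Hb_def norm_triangle_le)
  also have "norm (H d) \<le> cg_M H Hb g M j * norm d"
    using norm_cg_y_le[of H, OF H0] by (simp add: d j')
  finally have Hb_le: "norm (Hb d) \<le> K * norm d"
    by (simp add: K_def algebra_simps)
  have "g \<noteq> 0"
    using s eps by auto \<comment> \<open>otherwise \<open>s = 0\<close>, as \<open>0 powr delta = 0\<close>\<close>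
  from relative_residual_bound[OF Hb_le eps(1) \<open>eps \<le> K\<close> zeta this]
  show "d \<noteq> 0" and "norm (H d + s *\<^sub>R d + g) \<le> zeta / 2 * eps * norm d"
    using res r by (simp_all add: K_def Hb_def)
  show "eps * (norm d)\<^sup>2 \<le> d \<bullet> (H d + s *\<^sub>R d)"
    using curv by (simp add: d Hb_def)
qed

lemma sign_stable:
  fixes a v :: real
  assumes "\<bar>v\<bar> < \<bar>a\<bar>"
  shows "sgn (a + v) = sgn a" and "\<bar>a + v\<bar> = \<bar>a\<bar> + sgn a * v"
  using assms by (auto simp: sgn_if abs_if split: if_splits)

lemma geps_Inzeps:
  assumes "0 \<le> epsg" "i \<in> Inzeps epsg x"
  shows "geps Df lam epsg x $ i = Df x $ i + lam * sgn (x $ i)"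
proof -
  have "0 \<le> sqrt epsg"
    using assms(1) by simp
  then consider "sqrt epsg < x $ i" "0 < x $ i" | "x $ i < - sqrt epsg" "\<not> sqrt epsg < x $ i" "x $ i < 0"
    using assms(2) by (force simp: Inzeps_def)
  then show ?thesis
    by cases (auto simp: geps_def)
qed

lemma gmap_near_Inzeps:
  assumes "i \<in> Inzeps epsg x" "norm (y - x) \<le> sqrt epsg"
  shows "gmap Df lam y $ i = Df y $ i + lam * sgn (x $ i)"
proof -
  have "\<bar>(y - x) $ i\<bar> < \<bar>x $ i\<bar>"
    using assms component_le_norm_cart[of "y - x" i] by (simp add: Inzeps_def)
  then have "sgn (y $ i) = sgn (x $ i)" "x $ i \<noteq> 0"
    using sign_stable(1)[of "(y - x) $ i" "x $ i"] by auto
  then show ?thesis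
    by (auto simp: gmap_def sgn_if split: if_splits)
qed

lemma restr_gmap_near:
  assumes "0 \<le> epsg" "norm (y - x) \<le> sqrt epsg"
  shows "restr (Inzeps epsg x) (gmap Df lam y)
       = restr (Inzeps epsg x) (geps Df lam epsg x) + restr (Inzeps epsg x) (Df y - Df x)"
  by (simp add: restr_def vec_eq_iff geps_Inzeps[OF assms(1)] gmap_near_Inzeps[OF _ assms(2)])

lemma inner_restr_geps:
  assumes "0 \<le> epsg" "supported_on (Inzeps epsg x) d"
  shows "restr (Inzeps epsg x) (geps Df lam epsg x) \<bullet> d = Df x \<bullet> d + lam * (\<Sum>i\<in>UNIV. sgn (x $ i) * d $ i)"
proof -
  have "restr (Inzeps epsg x) (geps Df lam epsg x) $ i * d $ i = Df x $ i * d $ i + lam * (sgn (x $ i) * d $ i)" for i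
    using assms(2) by (auto simp: restr_def supported_on_def geps_Inzeps[OF assms(1)] algebra_simps)
  then show ?thesis
    by (simp add: inner_vec_def sum.distrib sum_distrib_left)
qed

lemma l1norm_add_supported:
  assumes "supported_on (Inzeps epsg x) v" "norm v \<le> sqrt epsg"
  shows "l1norm (x + v) = l1norm x + (\<Sum>i\<in>UNIV. sgn (x $ i) * v $ i)"
proof -
  have "\<bar>x $ i + v $ i\<bar> = \<bar>x $ i\<bar> + sgn (x $ i) * v $ i" for i
  proof (cases "i \<in> Inzeps epsg x")
    case True
    then have "\<bar>v $ i\<bar> < \<bar>x $ i\<bar>"
      using assms(2) component_le_norm_cart[of v i] by (simp add: Inzeps_def)
    then show ?thesis by (rule sign_stable(2))
  next
    case False
    then show ?thesis using assms(1) by (simp add: supported_on_def)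
  qed
  then show ?thesis
    by (simp add: l1norm_def sum.distrib)
qed

lemma phi_along_supported:
  assumes "0 \<le> epsg" "supported_on (Inzeps epsg x) d" "\<bar>t\<bar> * norm d \<le> sqrt epsg"
  shows "phi f lam (x + t *\<^sub>R d)
       = f (x + t *\<^sub>R d) + lam * l1norm x + t * (restr (Inzeps epsg x) (geps Df lam epsg x) \<bullet> d - Df x \<bullet> d)"
proof -
  have "supported_on (Inzeps epsg x) (t *\<^sub>R d)"
    using assms(2) by (simp add: supported_on_def)
  then have "l1norm (x + t *\<^sub>R d) = l1norm x + t * (\<Sum>i\<in>UNIV. sgn (x $ i) * d $ i)"
    using l1norm_add_supported[of epsg x "t *\<^sub>R d"] assms(3) by (simp add: sum_distrib_left algebra_simps)
  then show ?thesis
    using inner_restr_geps[OF assms(1,2)] by (simp add: phi_def algebra_simps)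
qed

lemma cubic_model_decrease:
  fixes t nd Q dr s eps zeta eta LH :: real
  assumes t: "0 < t" "t \<le> 1" and nd: "0 < nd" and Q: "eps * nd\<^sup>2 \<le> Q"
    and dr: "dr \<le> zeta / 2 * eps * nd\<^sup>2" and s: "0 < s" and eps: "0 < eps"
    and LH: "0 < LH" and zeta: "zeta \<le> 2"
    and step: "t * nd \<le> 3 * (1 - zeta - 2 * eta) * eps / LH"
  shows "t * (dr - Q) + t\<^sup>2 / 2 * (Q - s * nd\<^sup>2) + LH / 6 * t ^ 3 * nd ^ 3 < - eta * t\<^sup>2 * eps * nd\<^sup>2"
proof -
  have "-(t - t\<^sup>2 / 2) * Q \<le> -(t - t\<^sup>2 / 2) * (eps * nd\<^sup>2)"
    using Q t by (intro mult_left_mono_neg) (auto simp: power2_eq_square mult_left_le_one_le)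
  moreover have "LH / 6 * t ^ 3 * nd ^ 3 \<le> (1 - zeta - 2 * eta) * eps / 2 * t\<^sup>2 * nd\<^sup>2"
  proof -
    have "LH * (t * nd) \<le> 3 * (1 - zeta - 2 * eta) * eps"
      using step LH by (simp add: pos_le_divide_eq mult.commute)
    then have "LH * (t * nd) / 6 * (t\<^sup>2 * nd\<^sup>2) \<le> 3 * (1 - zeta - 2 * eta) * eps / 6 * (t\<^sup>2 * nd\<^sup>2)"
      by (intro mult_right_mono divide_right_mono) auto
    then show ?thesis
      by (simp add: power2_eq_square power3_eq_cube algebra_simps)
  qed
  moreover have "t * dr \<le> t * (zeta / 2 * eps * nd\<^sup>2)"
    using dr t by simp
  moreover have "0 < t\<^sup>2 / 2 * (s * nd\<^sup>2)"
    using t s nd by simp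
  moreover have "eps * nd\<^sup>2 * t * (1 - zeta / 2) * (t - 1) \<le> 0"
    using eps t zeta by (intro mult_nonneg_nonpos) auto
  ultimately show ?thesis
    by (simp add: field_simps power2_eq_square)
qed

lemma positive_root_eq:
  fixes B LH :: real
  assumes "0 \<le> B" "0 < LH"
  defines "u \<equiv> 4 / (sqrt (B\<^sup>2 + 8 * LH) + B)"
  shows "0 < u" and "LH / 2 * u\<^sup>2 + B / 2 * u = 1"
proof -
  define S where "S = sqrt (B\<^sup>2 + 8 * LH)"
  have S2: "S\<^sup>2 = B\<^sup>2 + 8 * LH" and "0 < S"
    using assms(1,2) by (simp_all add: S_def add_nonneg_pos)
  then have pos: "0 < S + B"
    using assms(1) by linarith
  have u: "u = 4 / (S + B)"
    by (simp add: u_def S_def)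
  with pos show "0 < u"
    by simp
  have "LH / 2 * (4 / W)\<^sup>2 + B / 2 * (4 / W) = (8 * LH + 2 * B * W) / W\<^sup>2" if "0 < W" for W :: real
    using that by (simp add: field_simps power2_eq_square)
  then have "LH / 2 * u\<^sup>2 + B / 2 * u = (8 * LH + 2 * B * (S + B)) / (S + B)\<^sup>2"
    using pos unfolding u by blast
  also have "(S + B)\<^sup>2 = 8 * LH + 2 * B * (S + B)"
    using S2 by (simp add: power2_eq_square algebra_simps)
  moreover have "0 < 8 * LH + 2 * B * (S + B)"
    using pos assms(1,2) by (simp add: add_pos_nonneg)
  ultimately show "LH / 2 * u\<^sup>2 + B / 2 * u = 1"
    by simp
qed

lemma step_length_lower_bound:
  fixes u LH B eps nd ng :: real
  assumes u: "0 < u" "LH / 2 * u\<^sup>2 + B / 2 * u = 1" and eps: "0 < eps" and nd: "0 \<le> nd"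
    and ng: "0 \<le> ng" "ng \<le> LH / 2 * nd\<^sup>2 + B / 2 * eps * nd" and LH: "0 < LH"
  shows "u\<^sup>2 * min (ng\<^sup>2 / eps) (eps ^ 3) \<le> eps * nd\<^sup>2"
proof (cases "u * eps \<le> nd")
  case True
  have "u\<^sup>2 * min (ng\<^sup>2 / eps) (eps ^ 3) \<le> u\<^sup>2 * eps ^ 3"
    by (intro mult_left_mono) auto
  also have "\<dots> = eps * (u * eps)\<^sup>2"
    by (simp add: power2_eq_square power3_eq_cube)
  also have "\<dots> \<le> eps * nd\<^sup>2"
    using True u eps by (intro mult_left_mono power_mono) auto
  finally show ?thesis .
next
  case False
  then have "nd * nd \<le> (u * eps) * nd"
    using nd by (intro mult_right_mono) auto
  then have "LH / 2 * nd\<^sup>2 \<le> LH / 2 * (u * eps) * nd"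
    using LH by (simp add: power2_eq_square mult.assoc mult_left_mono)
  then have "u * ng \<le> u * (eps * nd * (LH / 2 * u + B / 2))"
    using ng u by (intro mult_left_mono) (auto simp: algebra_simps)
  also have "\<dots> = eps * nd * (LH / 2 * u\<^sup>2 + B / 2 * u)"
    by (simp add: algebra_simps power2_eq_square)
  also have "\<dots> = eps * nd"
    using u(2) by simp
  finally have "(u * ng)\<^sup>2 \<le> (eps * nd)\<^sup>2"
    using u ng by (intro power_mono) auto
  then have "u\<^sup>2 * (ng\<^sup>2 / eps) \<le> eps * nd\<^sup>2"
    using eps by (simp add: divide_le_eq power2_eq_square algebra_simps)
  then show ?thesis
    by (meson min.cobounded1 mult_left_mono order_trans zero_le_power2)
qed

lemma has_real_derivative_along_ray:
  assumes "\<And>x. (f has_derivative (\<lambda>h. Df x \<bullet> h)) (at x)"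
  shows "((\<lambda>z. f (x + z *\<^sub>R d)) has_real_derivative Df (x + z *\<^sub>R d) \<bullet> d) (at z)"
proof -
  have "((\<lambda>z. f (x + z *\<^sub>R d)) has_derivative (\<lambda>u. Df (x + z *\<^sub>R d) \<bullet> (u *\<^sub>R d))) (at z)"
    by (rule has_derivative_compose[OF _ assms]) (auto intro!: derivative_eq_intros)
  then show ?thesis
    by (rule has_derivative_imp_has_field_derivative) simp
qed

lemma stays_below_level:
  fixes h :: "real \<Rightarrow> real"
  assumes cont: "continuous_on {0..t} h" and slope: "(h has_real_derivative D) (at 0)" "D < 0"
    and start: "h 0 \<le> c" and t: "0 < t" and avoid: "\<And>z. 0 < z \<Longrightarrow> z \<le> t \<Longrightarrow> h z \<noteq> c"
  shows "h t < c"
proof (rule ccontr)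
  assume "\<not> h t < c"
  then have "c < h t"
    using avoid[OF t order_refl] by linarith
  obtain e where e: "0 < e" "\<And>u. 0 < u \<Longrightarrow> u < e \<Longrightarrow> h (0 + u) < h 0"
    using DERIV_neg_dec_right[OF slope] by blast
  define u where "u = min (e / 2) (t / 2)"
  have u: "0 < u" "u < e" "u < t"
    using e t by (auto simp: u_def)
  then have "h u < c"
    using e(2)[of u] start by simp
  moreover have "continuous_on {u..t} h"
    using u by (intro continuous_on_subset[OF cont]) auto
  ultimately obtain z where "u \<le> z" "z \<le> t" "h z = c"
    using IVT'[of h u c t] \<open>c < h t\<close> u by auto
  then show False
    using avoid u by auto
qed

lemma backtracking_least:
  fixes theta nd m :: real and P :: "nat \<Rightarrow> bool"
  assumes theta: "0 < theta" "theta < 1" and m: "0 < m" and P: "\<And>j. theta ^ j * nd \<le> m \<Longrightarrow> P j"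
  shows "\<exists>j. P j"
    and "nd \<le> m \<and> (LEAST j. P j) = 0 \<or> theta * m < theta ^ (LEAST j. P j) * nd"
proof -
  show "\<exists>j. P j"
  proof (cases "0 < nd")
    case True
    then obtain j where "theta ^ j < m / nd"
      using real_arch_pow_inv[of "m / nd" theta] m theta by auto
    then show ?thesis
      using P[of j] True by (auto simp: pos_less_divide_eq)
  next
    case False
    then show ?thesis
      using P[of 0] m by auto
  qed
  show "nd \<le> m \<and> (LEAST j. P j) = 0 \<or> theta * m < theta ^ (LEAST j. P j) * nd"
  proof (cases "(LEAST j. P j)")
    case 0
    then show ?thesis
      using theta m by (cases "nd \<le> m") (auto intro: mult_left_le_one_le[of m theta, THEN le_less_trans])
  next
    case (Suc j)
    then have "\<not> P j"
      using not_less_Least[of j P] by simp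
    then have "m < theta ^ j * nd"
      using P by force
    then show ?thesis
      using Suc theta by simp
  qed
qed

text \<open>The last entry of the minimum is not needed for a SOL step.\<close>
definition c_sol :: "real \<Rightarrow> real \<Rightarrow> real \<Rightarrow> real \<Rightarrow> real \<Rightarrow> real" where
  "c_sol zeta tauhat LH eta theta = eta *
     Min {(4 / (sqrt ((zeta + 4 * tauhat)\<^sup>2 + 8 * LH) + (zeta + 4 * tauhat)))\<^sup>2,
          9 * (1 - zeta - 2 * eta)\<^sup>2 * theta\<^sup>2 / LH\<^sup>2,
          theta\<^sup>2,
          (1 - zeta)\<^sup>2 * theta\<^sup>2 / (4 * (max (LH / 3) (2 * eta))\<^sup>2)}"

lemma c_sol_full_step_bound:
  assumes eta: "0 < eta" and eps: "0 < epsh" "0 \<le> epsg" and LH: "0 < LH" and B: "0 \<le> zeta + 4 * tauhat"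
    and nd: "0 \<le> nd" and ng: "0 \<le> ng" "ng \<le> LH / 2 * nd\<^sup>2 + (zeta + 4 * tauhat) / 2 * epsh * nd"
  shows "c_sol zeta tauhat LH eta theta * Min {ng\<^sup>2 / epsh, epsh ^ 3, epsg * epsh} \<le> eta * epsh * nd\<^sup>2"
proof -
  define u where "u = 4 / (sqrt ((zeta + 4 * tauhat)\<^sup>2 + 8 * LH) + (zeta + 4 * tauhat))"
  have u: "0 < u" "LH / 2 * u\<^sup>2 + (zeta + 4 * tauhat) / 2 * u = 1"
    using positive_root_eq[OF B LH] by (simp_all add: u_def)
  have Min_nonneg: "0 \<le> Min {ng\<^sup>2 / epsh, epsh ^ 3, epsg * epsh}"
    using eps by simp
  have "c_sol zeta tauhat LH eta theta \<le> eta * u\<^sup>2"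
    unfolding c_sol_def u_def using eta by (intro mult_left_mono) auto
  moreover have "Min {ng\<^sup>2 / epsh, epsh ^ 3, epsg * epsh} \<le> min (ng\<^sup>2 / epsh) (epsh ^ 3)"
    by simp
  ultimately have "c_sol zeta tauhat LH eta theta * Min {ng\<^sup>2 / epsh, epsh ^ 3, epsg * epsh}
      \<le> eta * u\<^sup>2 * min (ng\<^sup>2 / epsh) (epsh ^ 3)"
    using Min_nonneg eta by (intro mult_mono) auto
  also have "\<dots> \<le> eta * (epsh * nd\<^sup>2)"
    using step_length_lower_bound[OF u eps(1) nd ng LH] eta by (simp add: mult.assoc)
  finally show ?thesis
    by (simp add: algebra_simps)
qed

lemma c_sol_backtracked_bound:
  assumes eta: "0 < eta" and eps: "0 < epsh" "0 \<le> epsg" and A: "0 \<le> A"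
    and m: "m = min (3 * (1 - zeta - 2 * eta) * epsh / LH) (sqrt epsg)"
  shows "c_sol zeta tauhat LH eta theta * Min {A, epsh ^ 3, epsg * epsh} \<le> eta * epsh * (theta * m)\<^sup>2"
proof -
  have Min_nonneg: "0 \<le> Min {A, epsh ^ 3, epsg * epsh}"
    using eps A by simp
  show ?thesis
  proof (cases "m = sqrt epsg")
    case True
    have "c_sol zeta tauhat LH eta theta \<le> eta * theta\<^sup>2"
      unfolding c_sol_def using eta by (intro mult_left_mono) auto
    moreover have "Min {A, epsh ^ 3, epsg * epsh} \<le> epsg * epsh"
      by simp
    ultimately have "c_sol zeta tauhat LH eta theta * Min {A, epsh ^ 3, epsg * epsh}
        \<le> eta * theta\<^sup>2 * (epsg * epsh)"
      using Min_nonneg eta by (intro mult_mono) auto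
    then show ?thesis
      using True eps by (simp add: algebra_simps)
  next
    case False
    then have m_eq: "m = 3 * (1 - zeta - 2 * eta) * epsh / LH"
      using m by (simp add: min_def split: if_splits)
    have "c_sol zeta tauhat LH eta theta \<le> eta * (9 * (1 - zeta - 2 * eta)\<^sup>2 * theta\<^sup>2 / LH\<^sup>2)"
      unfolding c_sol_def using eta by (intro mult_left_mono) auto
    moreover have "Min {A, epsh ^ 3, epsg * epsh} \<le> epsh ^ 3"
      by simp
    ultimately have "c_sol zeta tauhat LH eta theta * Min {A, epsh ^ 3, epsg * epsh}
        \<le> eta * (9 * (1 - zeta - 2 * eta)\<^sup>2 * theta\<^sup>2 / LH\<^sup>2) * epsh ^ 3"
      using Min_nonneg eta by (intro mult_mono) auto
    then show ?thesis
      by (simp add: m_eq power2_eq_square power3_eq_cube field_simps)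
  qed
qed

locale newton_cg_sol_step =
  fixes f :: "real^'n \<Rightarrow> real" and Df :: "real^'n \<Rightarrow> real^'n" and Hf :: "real^'n \<Rightarrow> real^'n^'n"
    and lam LH epsg epsh tauhat zeta eta theta s :: real and x0 xk d :: "real^'n"
  assumes grad: "\<And>x. (f has_derivative (\<lambda>h. Df x \<bullet> h)) (at x)"
    and gradient_error: "\<And>y. y \<in> levelset f lam x0 \<Longrightarrow>
          norm (Hf xk *v (y - xk) - (Df y - Df xk)) \<le> LH / 2 * (norm (y - xk))\<^sup>2"
    and cubic_model: "\<And>y. y \<in> levelset f lam x0 \<Longrightarrow>
          f y \<le> f xk + Df xk \<bullet> (y - xk) + 1/2 * ((y - xk) \<bullet> (Hf xk *v (y - xk)))
                + LH / 6 * (norm (y - xk)) ^ 3"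
    and xk_level: "xk \<in> levelset f lam x0"
    and LH: "0 < LH" and epsg: "0 < epsg" and epsh: "0 < epsh" and tauhat: "0 \<le> tauhat"
    and zeta: "0 < zeta" "zeta < 1" and eta: "0 < eta" "eta < (1 - zeta) / 2"
    and theta: "0 < theta" "theta < 1"
    and shift: "0 < s" "s \<le> 2 * tauhat * epsh"
    and d_supported: "supported_on (Inzeps epsg xk) d" and d_nonzero: "d \<noteq> 0"
    and residual: "norm (restr (Inzeps epsg xk) (Hf xk *v d) + s *\<^sub>R d
                         + restr (Inzeps epsg xk) (geps Df lam epsg xk)) \<le> zeta / 2 * epsh * norm d"
    and curvature: "epsh * (norm d)\<^sup>2 \<le> d \<bullet> (restr (Inzeps epsg xk) (Hf xk *v d) + s *\<^sub>R d)"
begin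

abbreviation "I \<equiv> Inzeps epsg xk"
abbreviation "g \<equiv> restr I (geps Df lam epsg xk)"

definition step_cap :: real where
  "step_cap = min (3 * (1 - zeta - 2 * eta) * epsh / LH) (sqrt epsg)"

lemma step_cap_pos: "0 < step_cap"
  using LH epsg epsh eta by (simp add: step_cap_def)

lemma inner_residual_le:
  "d \<bullet> (restr I (Hf xk *v d) + s *\<^sub>R d + g) \<le> zeta / 2 * epsh * (norm d)\<^sup>2"
proof -
  have "d \<bullet> (restr I (Hf xk *v d) + s *\<^sub>R d + g) \<le> norm d * norm (restr I (Hf xk *v d) + s *\<^sub>R d + g)"
    by (rule norm_cauchy_schwarz)
  also have "\<dots> \<le> norm d * (zeta / 2 * epsh * norm d)"
    using residual by (rule mult_left_mono) simp
  finally show ?thesis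
    by (simp add: power2_eq_square algebra_simps)
qed

lemma slope_negative: "g \<bullet> d < 0"
proof -
  have "g \<bullet> d = d \<bullet> (restr I (Hf xk *v d) + s *\<^sub>R d + g) - d \<bullet> (restr I (Hf xk *v d) + s *\<^sub>R d)"
    by (simp add: inner_add_right inner_commute)
  also have "\<dots> \<le> (zeta / 2 - 1) * epsh * (norm d)\<^sup>2"
    using inner_residual_le curvature by (simp add: algebra_simps)
  also have "\<dots> < 0"
    using zeta epsh d_nonzero by (simp add: mult_neg_pos)
  finally show ?thesis .
qed

lemma phi_ray:
  "\<bar>t\<bar> * norm d \<le> sqrt epsg \<Longrightarrow>
   phi f lam (xk + t *\<^sub>R d) = f (xk + t *\<^sub>R d) + lam * l1norm xk + t * (g \<bullet> d - Df xk \<bullet> d)"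
  using phi_along_supported[OF _ d_supported] epsg by simp

lemma decrease_in_levelset:
  assumes t: "0 < t" "t \<le> 1" "t * norm d \<le> step_cap" and level: "xk + t *\<^sub>R d \<in> levelset f lam x0"
  shows "phi f lam (xk + t *\<^sub>R d) < phi f lam xk - eta * t\<^sup>2 * epsh * (norm d)\<^sup>2"
proof -
  define Q where "Q = d \<bullet> (restr I (Hf xk *v d) + s *\<^sub>R d)"
  define dr where "dr = d \<bullet> (restr I (Hf xk *v d) + s *\<^sub>R d + g)"
  have gd: "g \<bullet> d = dr - Q"
    by (simp add: Q_def dr_def inner_add_right inner_commute)
  have dHd: "d \<bullet> (Hf xk *v d) = Q - s * (norm d)\<^sup>2"
    by (simp add: Q_def inner_add_right inner_restr_supported[OF d_supported] power2_norm_eq_inner)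
  have "f (xk + t *\<^sub>R d) \<le> f xk + t * (Df xk \<bullet> d) + t\<^sup>2 / 2 * (Q - s * (norm d)\<^sup>2) + LH / 6 * t ^ 3 * norm d ^ 3"
    using cubic_model[OF level] t dHd
    by (simp add: matrix_vector_mult_scaleR power_mult_distrib power2_eq_square)
  moreover have "phi f lam (xk + t *\<^sub>R d) = f (xk + t *\<^sub>R d) + lam * l1norm xk + t * (g \<bullet> d - Df xk \<bullet> d)"
    using t by (intro phi_ray) (simp add: step_cap_def)
  ultimately have "phi f lam (xk + t *\<^sub>R d)
      \<le> phi f lam xk + (t * (dr - Q) + t\<^sup>2 / 2 * (Q - s * (norm d)\<^sup>2) + LH / 6 * t ^ 3 * norm d ^ 3)"
    by (simp add: phi_def gd algebra_simps)
  also have "\<dots> < phi f lam xk + - eta * t\<^sup>2 * epsh * (norm d)\<^sup>2"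
    using t curvature inner_residual_le d_nonzero shift epsh LH zeta
    by (intro add_strict_left_mono cubic_model_decrease) (auto simp: Q_def dr_def step_cap_def)
  finally show ?thesis
    by simp
qed

text \<open>The Taylor bounds are only available on the level set; a first exit from it along the
  ray would be a point of the level set where the decrease estimate fails.\<close>
lemma ray_in_levelset:
  assumes t: "0 < t" "t \<le> 1" "t * norm d \<le> step_cap"
  shows "xk + t *\<^sub>R d \<in> levelset f lam x0"
proof -
  \<comment> \<open>\<open>h\<close> agrees with \<open>\<phi>\<close> on the short steps and, unlike \<open>\<phi>\<close>, is differentiable.\<close>
  define h where "h z = f (xk + z *\<^sub>R d) + lam * l1norm xk + z * (g \<bullet> d - Df xk \<bullet> d)" for z
  have h_deriv: "(h has_real_derivative Df (xk + z *\<^sub>R d) \<bullet> d + (g \<bullet> d - Df xk \<bullet> d)) (at z)" for z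
    using has_real_derivative_along_ray[OF grad] unfolding h_def by (auto intro!: derivative_eq_intros)
  have h_phi: "h z = phi f lam (xk + z *\<^sub>R d)" if "0 \<le> z" "z \<le> t" for z
  proof -
    have "z * norm d \<le> t * norm d"
      using that by (simp add: mult_right_mono)
    then show ?thesis
      using that t by (simp add: h_def phi_ray step_cap_def)
  qed
  have phi_xk: "phi f lam xk \<le> phi f lam x0"
    using xk_level by (simp add: levelset_def)
  have "h t < phi f lam x0"
  proof (rule stays_below_level[where h = h and t = t and D = "g \<bullet> d"])
    show "continuous_on {0..t} h"
      using h_deriv by (meson DERIV_isCont continuous_at_imp_continuous_on)
    show "(h has_real_derivative g \<bullet> d) (at 0)"
      using h_deriv[of 0] by simp
    show "h 0 \<le> phi f lam x0"
      using h_phi[of 0] t phi_xk by simp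
    show "h z \<noteq> phi f lam x0" if "0 < z" "z \<le> t" for z
    proof
      assume "h z = phi f lam x0"
      then have "xk + z *\<^sub>R d \<in> levelset f lam x0"
        using h_phi that by (simp add: levelset_def)
      moreover have "z * norm d \<le> step_cap"
        using that t by (meson mult_right_mono norm_ge_zero order_trans)
      ultimately have "phi f lam (xk + z *\<^sub>R d) < phi f lam xk"
        using decrease_in_levelset[of z] that t eta epsh by (smt (verit) mult_nonneg_nonneg zero_le_power2)
      then show False
        using \<open>h z = phi f lam x0\<close> h_phi that phi_xk by simp
    qed
  qed (use slope_negative t in auto)
  then show ?thesis
    using h_phi[of t] t by (simp add: levelset_def)
qed

lemma short_step_decrease:
  "0 < t \<Longrightarrow> t \<le> 1 \<Longrightarrow> t * norm d \<le> step_cap \<Longrightarrow>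
   phi f lam (xk + t *\<^sub>R d) < phi f lam xk - eta * t\<^sup>2 * epsh * (norm d)\<^sup>2"
  using decrease_in_levelset ray_in_levelset by blast

lemma full_step_gradient:
  assumes short: "norm d \<le> sqrt epsg" and level: "xk + d \<in> levelset f lam x0"
  shows "norm (restr I (gmap Df lam (xk + d))) \<le> LH / 2 * (norm d)\<^sup>2 + (zeta + 4 * tauhat) / 2 * epsh * norm d"
proof -
  define E where "E = Hf xk *v d - (Df (xk + d) - Df xk)"
  define r where "r = restr I (Hf xk *v d) + s *\<^sub>R d + g"
  have "restr I (gmap Df lam (xk + d)) = g + restr I (Df (xk + d) - Df xk)"
    using restr_gmap_near[of epsg "xk + d" xk] short epsg by simp
  also have "\<dots> = r - s *\<^sub>R d - restr I E"
    by (simp add: r_def E_def linear_diff[OF linear_restr])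
  finally have "norm (restr I (gmap Df lam (xk + d))) \<le> norm r + s * norm d + norm E"
    using shift norm_restr_le[of I E] by (smt (verit) norm_scaleR norm_triangle_ineq4 abs_of_pos)
  moreover have "norm E \<le> LH / 2 * (norm d)\<^sup>2"
    using gradient_error[OF level] by (simp add: E_def)
  moreover have "s * norm d \<le> 2 * tauhat * epsh * norm d"
    using shift by (simp add: mult_right_mono)
  moreover have "(zeta + 4 * tauhat) / 2 * epsh * norm d = zeta / 2 * epsh * norm d + 2 * tauhat * epsh * norm d"
    by (simp add: algebra_simps)
  ultimately show ?thesis
    using residual unfolding r_def by linarith
qed

lemma accepted_step_bound:
  assumes step: "norm d \<le> step_cap \<and> t = 1 \<or> theta * step_cap < t * norm d"
    and decrease: "eta * epsh * (t * norm d)\<^sup>2 < phi f lam xk - phi f lam (xk + t *\<^sub>R d)"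
  shows "c_sol zeta tauhat LH eta theta
           * Min {(norm (restr I (gmap Df lam (xk + t *\<^sub>R d))))\<^sup>2 / epsh, epsh ^ 3, epsg * epsh}
         \<le> phi f lam xk - phi f lam (xk + t *\<^sub>R d)"
proof -
  define A where "A = (norm (restr I (gmap Df lam (xk + t *\<^sub>R d))))\<^sup>2 / epsh"
  have "A \<ge> 0"
    by (simp add: A_def epsh less_imp_le)
  from step have "c_sol zeta tauhat LH eta theta * Min {A, epsh ^ 3, epsg * epsh} \<le> eta * epsh * (t * norm d)\<^sup>2"
  proof (elim disjE)
    assume full: "norm d \<le> step_cap \<and> t = 1"
    then have "norm d \<le> sqrt epsg"
      by (simp add: step_cap_def)
    moreover have "xk + d \<in> levelset f lam x0"
      using decrease full xk_level eta epsh
      by (simp add: levelset_def) (smt (verit) mult_nonneg_nonneg zero_le_power2)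
    ultimately have "norm (restr I (gmap Df lam (xk + d))) \<le> LH / 2 * (norm d)\<^sup>2 + (zeta + 4 * tauhat) / 2 * epsh * norm d"
      by (rule full_step_gradient)
    then have "c_sol zeta tauhat LH eta theta * Min {A, epsh ^ 3, epsg * epsh} \<le> eta * epsh * (norm d)\<^sup>2"
      unfolding A_def using full by (intro c_sol_full_step_bound) (use eta epsh epsg LH zeta tauhat in auto)
    then show ?thesis
      using full by simp
  next
    assume "theta * step_cap < t * norm d"
    then have "eta * epsh * (theta * step_cap)\<^sup>2 \<le> eta * epsh * (t * norm d)\<^sup>2"
      using theta step_cap_pos eta epsh by (intro mult_left_mono power_mono) auto
    moreover have "c_sol zeta tauhat LH eta theta * Min {A, epsh ^ 3, epsg * epsh} \<le> eta * epsh * (theta * step_cap)\<^sup>2"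
      by (rule c_sol_backtracked_bound) (use eta epsh epsg \<open>A \<ge> 0\<close> in \<open>simp_all add: step_cap_def\<close>)
    ultimately show ?thesis
      by linarith
  qed
  then show ?thesis
    using decrease by (simp add: A_def)
qed

lemma sol_step_decrease:
  defines "P \<equiv> \<lambda>j. phi f lam (xk + theta ^ j *\<^sub>R d) < phi f lam xk - eta * theta ^ (2 * j) * epsh * (norm d)\<^sup>2"
  shows "\<exists>j. P j"
    and "c_sol zeta tauhat LH eta theta
           * Min {(norm (restr I (gmap Df lam (xk + theta ^ (LEAST j. P j) *\<^sub>R d))))\<^sup>2 / epsh,
                  epsh ^ 3, epsg * epsh}
         \<le> phi f lam xk - phi f lam (xk + theta ^ (LEAST j. P j) *\<^sub>R d)"
proof -
  have P: "P j" if "theta ^ j * norm d \<le> step_cap" for j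
    using short_step_decrease[of "theta ^ j"] that theta
    by (simp add: P_def power_le_one power_mult mult.commute[of 2] power2_eq_square)
  note backtrack = backtracking_least[where nd = "norm d" and P = P, OF theta step_cap_pos P]
  show "\<exists>j. P j"
    by (rule backtrack(1))
  have "P (LEAST j. P j)"
    using backtrack(1) by (rule LeastI_ex)
  then have "eta * epsh * (theta ^ (LEAST j. P j) * norm d)\<^sup>2
      < phi f lam xk - phi f lam (xk + theta ^ (LEAST j. P j) *\<^sub>R d)"
    by (simp add: P_def power_mult mult.commute[of 2] algebra_simps)
  moreover have "norm d \<le> step_cap \<and> theta ^ (LEAST j. P j) = 1
      \<or> theta * step_cap < theta ^ (LEAST j. P j) * norm d"
    using backtrack(2) by auto
  ultimately show "c_sol zeta tauhat LH eta theta
           * Min {(norm (restr I (gmap Df lam (xk + theta ^ (LEAST j. P j) *\<^sub>R d))))\<^sup>2 / epsh,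
                  epsh ^ 3, epsg * epsh}
         \<le> phi f lam xk - phi f lam (xk + theta ^ (LEAST j. P j) *\<^sub>R d)"
    by (intro accepted_step_bound)
qed

end

theorem lemma10:
  fixes f :: "real^'n \<Rightarrow> real" and Df :: "real^'n \<Rightarrow> real^'n" and Hf :: "real^'n \<Rightarrow> real^'n^'n"
    and lam LH Lg Ug epsg epsh delta tauhat zeta eta theta tauk M :: real
    and x0 xk d :: "real^'n"
  assumes lam: "lam > 0"
    and grad: "\<And>x. (f has_derivative (\<lambda>h. Df x \<bullet> h)) (at x)"
    and hess: "\<And>x. (Df has_derivative (\<lambda>h. Hf x *v h)) (at x)"
    and hess_cont: "continuous_on UNIV Hf"
    and bnd: "bounded (levelset f lam x0)"
    and lip: "\<exists>U L1 L2. open U \<and> levelset f lam x0 \<subseteq> U \<and>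
               (\<forall>x\<in>U. \<forall>y\<in>U. norm (Df x - Df y) \<le> L1 * dist x y \<and>
                               onorm (\<lambda>v. (Hf x - Hf y) *v v) \<le> L2 * dist x y)"
    and cpos: "Lg > 0" "LH > 0" "Ug > 0"
    and LH1: "\<And>x y. x \<in> levelset f lam x0 \<Longrightarrow> y \<in> levelset f lam x0 \<Longrightarrow>
               norm (Hf x *v (y - x) - (Df y - Df x)) \<le> LH / 2 * (norm (y - x))\<^sup>2"
    and LH2: "\<And>x y. x \<in> levelset f lam x0 \<Longrightarrow> y \<in> levelset f lam x0 \<Longrightarrow>
               f y \<le> f x + Df x \<bullet> (y - x) + 1/2 * ((y - x) \<bullet> (Hf x *v (y - x)))
                     + LH / 6 * (norm (y - x)) ^ 3"
    and Ug: "\<And>x. x \<in> levelset f lam x0 \<Longrightarrow> norm (Df x) \<le> Ug"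
    and Lg: "\<And>x. x \<in> levelset f lam x0 \<Longrightarrow> onorm (\<lambda>v. Hf x *v v) \<le> Lg"
    and epsg: "0 < epsg" "epsg < 1" and epsh: "0 < epsh" "epsh < 1"
    and delta: "0 \<le> delta" "delta \<le> 1" and tauhat: "tauhat \<ge> 1"
    and zeta: "0 < zeta" "zeta < 1" and eta: "0 < eta" "eta < (1 - zeta) / 2"
    and theta: "0 < theta" "theta < 1"
    and xk: "xk \<in> levelset f lam x0"
    and inv1: "I0eps epsg xk = {} \<or> (\<forall>i\<in>I0eps epsg xk. geps Df lam epsg xk $ i = 0)"
    and inv2: "Inzeps epsg xk \<noteq> {}"
    and inv3: "norm (restr (Inzeps epsg xk) (geps Df lam epsg xk)) > epsg"
    and tauk: "2 * epsh / norm (restr (Inzeps epsg xk) (geps Df lam epsg xk)) powr delta \<le> tauk"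
              "tauk \<le> 2 * tauhat * epsh / norm (restr (Inzeps epsg xk) (geps Df lam epsg xk)) powr delta"
    and M: "M \<ge> 0"
    and sol: "capped_cg_sol (\<lambda>v. restr (Inzeps epsg xk) (Hf xk *v v))
                (restr (Inzeps epsg xk) (geps Df lam epsg xk)) epsh zeta delta tauk M d"
  shows "(\<exists>j::nat. phi f lam (xk + theta ^ j *\<^sub>R d)
                    < phi f lam xk - eta * theta ^ (2 * j) * epsh * (norm d)\<^sup>2) \<and>
         (let jk = (LEAST j::nat. phi f lam (xk + theta ^ j *\<^sub>R d)
                    < phi f lam xk - eta * theta ^ (2 * j) * epsh * (norm d)\<^sup>2);
              xk1 = xk + theta ^ jk *\<^sub>R d;
              csol = eta * Min {(4 / (sqrt ((zeta + 4 * tauhat)\<^sup>2 + 8 * LH) + (zeta + 4 * tauhat)))\<^sup>2,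
                                9 * (1 - zeta - 2 * eta)\<^sup>2 * theta\<^sup>2 / LH\<^sup>2,
                                theta\<^sup>2,
                                (1 - zeta)\<^sup>2 * theta\<^sup>2 / (4 * (max (LH / 3) (2 * eta))\<^sup>2)}
          in phi f lam xk - phi f lam xk1 \<ge>
             csol * Min {(norm (restr (Inzeps epsg xk) (gmap Df lam xk1)))\<^sup>2 / epsh,
                         epsh ^ 3, epsg * epsh})"
proof -
  define I where "I = Inzeps epsg xk"
  define g where "g = restr I (geps Df lam epsg xk)"
  define s where "s = tauk * norm g powr delta"
  have "0 < norm g"
    using inv3 epsg unfolding g_def I_def by linarith
  then have "0 < norm g powr delta"
    by simp
  then have shift: "2 * epsh \<le> s" "s \<le> 2 * tauhat * epsh"
    using tauk by (simp_all add: s_def g_def I_def divide_le_eq le_divide_eq)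
  have lin: "linear (\<lambda>v. restr I (Hf xk *v v))"
    using linear_compose[OF matrix_vector_mul_linear linear_restr] by (simp add: o_def)
  have H_supp: "supported_on I v \<Longrightarrow> supported_on I (restr I (Hf xk *v v))" for v
    by (rule supported_on_restr)
  have g_supp: "supported_on I g"
    by (simp add: g_def supported_on_restr)
  have "epsh \<le> s"
    using shift epsh by simp
  note cg = capped_cg_sol_bounds[where I = I and s = s, OF sol[folded I_def, folded g_def] lin H_supp g_supp
      s_def this epsh(1) less_imp_le[OF zeta(1)] less_imp_le[OF zeta(2)] M]
  interpret newton_cg_sol_step f Df Hf lam LH epsg epsh tauhat zeta eta theta s x0 xk d
    using cg grad LH1[OF xk] LH2[OF xk] xk cpos(2) epsg epsh tauhat zeta eta theta shift
    by unfold_locales (auto simp: I_def g_def)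
  show ?thesis
    using sol_step_decrease unfolding c_sol_def Let_def by simp
qed

end
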